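(* Let $V$ be a reflexive Banach space, $1<p<\infty$, and let $g\in L^p_b(\mathbb R,V)$ be time regular, or space regular, or normal. Then $g$ is weakly normal.
   Context: $L^p_b(\mathbb R,V)$ has norm $\sup_{s}\|g\|_{L^p((s,s+1),V)}$. Time regular: for every $\varepsilon>0$ there is $g_\varepsilon\in C^k_b(\mathbb R,V)$ for all $k$ with $\|g-g_\varepsilon\|_{L^p_b(\mathbb R,V)}\le\varepsilon$. Space regular: for every $\varepsilon>0$ there are a finite-dimensional $V_\varepsilon\subset V$ and $g_\varepsilon\in L^p_b(\mathbb R,V_\varepsilon)$ with $\|g-g_\varepsilon\|_{L^p_b(\mathbb R,V)}\le\varepsilon$. Normal: $\sup_{t\in\mathbb R}\int_t^{t+\tau}\|g(s)\|_V^p\,ds\to0$ as $\tau\to0$. Weakly normal: for every $\varepsilon>0$ there exist $\tau=\tau(\varepsilon)>0$, a finite-dimensional subspace $V_\varepsilon\subset V$ and $g_\varepsilon\in L^p_b(\mathbb R,V_\varepsilon)$ such that $\sup_{t\in\mathbb R}\int_t^{t+\tau}\|g(s)-g_\varepsilon(s)\|_V^p\,ds\le\varepsilon$. *)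

theory Defs
  imports "HOL-Analysis.Analysis"
begin

definition reflexive_space :: "'a::banach itself \<Rightarrow> bool" where
  "reflexive_space _ \<longleftrightarrow>
     surj (\<lambda>x::'a. Blinfun (\<lambda>f::'a \<Rightarrow>\<^sub>L real. blinfun_apply f x))"

definition strongly_measurable :: "(real \<Rightarrow> 'a::real_normed_vector) \<Rightarrow> bool" where
  "strongly_measurable g \<longleftrightarrow>
     (\<exists>s :: nat \<Rightarrow> real \<Rightarrow> 'a. (\<forall>n. simple_function lborel (s n)) \<and>
        (AE x in lborel. (\<lambda>n. s n x) \<longlonglongrightarrow> g x))"

definition Lpb :: "real \<Rightarrow> (real \<Rightarrow> 'a::real_normed_vector) \<Rightarrow> bool" where
  "Lpb p g \<longleftrightarrow> strongly_measurable g \<and>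
     (SUP s. \<integral>\<^sup>+ t\<in>{s..s+1}. ennreal (norm (g t) powr p) \<partial>lborel) < \<infinity>"

definition Lpb_norm_le :: "real \<Rightarrow> (real \<Rightarrow> 'a::real_normed_vector) \<Rightarrow> real \<Rightarrow> bool" where
  "Lpb_norm_le p f \<epsilon> \<longleftrightarrow>
     (SUP s. \<integral>\<^sup>+ t\<in>{s..s+1}. ennreal (norm (f t) powr p) \<partial>lborel) \<le> ennreal (\<epsilon> powr p)"

definition Cb_infty :: "(real \<Rightarrow> 'a::real_normed_vector) \<Rightarrow> bool" where
  "Cb_infty h \<longleftrightarrow> (\<exists>D :: nat \<Rightarrow> real \<Rightarrow> 'a. D 0 = h \<and>
     (\<forall>k t. (D k has_vector_derivative D (Suc k) t) (at t)) \<and>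
     (\<forall>k. bounded (range (D k))))"

definition time_regular :: "real \<Rightarrow> (real \<Rightarrow> 'a::real_normed_vector) \<Rightarrow> bool" where
  "time_regular p g \<longleftrightarrow> (\<forall>\<epsilon>>0. \<exists>g\<epsilon>. Cb_infty g\<epsilon> \<and> Lpb_norm_le p (\<lambda>t. g t - g\<epsilon> t) \<epsilon>)"

definition space_regular :: "real \<Rightarrow> (real \<Rightarrow> 'a::real_normed_vector) \<Rightarrow> bool" where
  "space_regular p g \<longleftrightarrow> (\<forall>\<epsilon>>0. \<exists>B g\<epsilon>. finite B \<and> Lpb p g\<epsilon> \<and> range g\<epsilon> \<subseteq> span B \<and>
      Lpb_norm_le p (\<lambda>t. g t - g\<epsilon> t) \<epsilon>)"

definition normal :: "real \<Rightarrow> (real \<Rightarrow> 'a::real_normed_vector) \<Rightarrow> bool" where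
  "normal p g \<longleftrightarrow>
     ((\<lambda>\<tau>. SUP t. \<integral>\<^sup>+ s\<in>{t..t+\<tau>}. ennreal (norm (g s) powr p) \<partial>lborel) \<longlongrightarrow> 0) (at_right 0)"

definition weakly_normal :: "real \<Rightarrow> (real \<Rightarrow> 'a::real_normed_vector) \<Rightarrow> bool" where
  "weakly_normal p g \<longleftrightarrow> (\<forall>\<epsilon>>0. \<exists>\<tau>>0. \<exists>B g\<epsilon>. finite B \<and> Lpb p g\<epsilon> \<and> range g\<epsilon> \<subseteq> span B \<and>
      (\<forall>t. (\<integral>\<^sup>+ s\<in>{t..t+\<tau>}. ennreal (norm (g s - g\<epsilon> s) powr p) \<partial>lborel) \<le> ennreal \<epsilon>))"

end

theory Submission
  imports Defs
begin

text \<open>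
  A time regular \<open>g\<close> is in fact normal: for a smooth approximant \<open>h\<close> with \<open>\<parallel>h\<parallel> \<le> M\<close>, the
  pointwise bound \<open>\<parallel>g\<parallel>^p \<le> 2^p (\<parallel>g - h\<parallel>^p + M^p)\<close> integrated over a window of length
  \<open>\<tau> \<le> 1\<close> is at most \<open>2^p\<close> times the unit-window integral of \<open>\<parallel>g - h\<parallel>^p\<close> plus \<open>2^p M^p \<tau>\<close>,
  which is small for a good \<open>h\<close> and a short window. A normal \<open>g\<close> is weakly normal with the
  zero approximant, and a space regular \<open>g\<close> with its own approximant and \<open>\<tau> = 1\<close>.
\<close>

lemma powr_le_of_le_add:
  fixes a b c p :: real
  assumes "0 \<le> a" "a \<le> b + c" "0 \<le> b" "0 \<le> c" "0 < p"
  shows "a powr p \<le> 2 powr p * (b powr p + c powr p)"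
proof -
  have "a powr p \<le> (2 * max b c) powr p"
    using assms by (intro powr_mono2) auto
  also have "\<dots> = 2 powr p * max b c powr p"
    using assms by (simp add: powr_mult)
  also have "max b c powr p \<le> b powr p + c powr p"
    by (cases "b \<le> c") (auto simp: max_def)
  finally show ?thesis by simp
qed

lemma simple_function_norm_diff_measurable:
  fixes s h :: "real \<Rightarrow> 'a::real_normed_vector"
  assumes "simple_function lborel s" "continuous_on UNIV h"
  shows "(\<lambda>x. norm (s x - h x)) \<in> borel_measurable lborel"
proof (rule borel_measurable_iff_greater[THEN iffD2], intro allI)
  fix a
  have level_set: "s -` {c} \<inter> {x. a < norm (c - h x)} \<in> sets lborel" for c
  proof -
    have "open {x. a < norm (c - h x)}"
      by (intro open_Collect_less continuous_intros continuous_on_subset[OF assms(2)]) auto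
    then show ?thesis
      using simple_functionD(2)[OF assms(1), of "{c}"] by auto
  qed
  have "{x \<in> space lborel. a < norm (s x - h x)}
      = (\<Union>c\<in>range s. s -` {c} \<inter> {x. a < norm (c - h x)})"
    by auto
  also have "\<dots> \<in> sets lborel"
    using simple_functionD(1)[OF assms(1)] level_set by (intro sets.finite_UN) auto
  finally show "{x \<in> space lborel. a < norm (s x - h x)} \<in> sets lborel" .
qed

text \<open>
  \<open>V\<close> need not be second countable, so \<open>g\<close> itself may fail to be Borel measurable; the
  real-valued function \<open>\<parallel>g - h\<parallel>\<close> has a Borel version, which is all the integrals need.
\<close>
lemma strongly_measurable_norm_diff_AE_borel:
  fixes g h :: "real \<Rightarrow> 'a::real_normed_vector"
  assumes "strongly_measurable g" "continuous_on UNIV h"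
  obtains F where "F \<in> borel_measurable lborel" "AE x in lborel. F x = norm (g x - h x)"
proof -
  obtain s where simple: "\<And>n. simple_function lborel (s n)"
    and lim: "AE x in lborel. (\<lambda>n. s n x) \<longlonglongrightarrow> g x"
    using assms(1) unfolding strongly_measurable_def by blast
  define F where "F x = lim (\<lambda>n. norm (s n x - h x))" for x
  have "F \<in> borel_measurable lborel"
    unfolding F_def
    by (intro borel_measurable_lim_metric simple_function_norm_diff_measurable simple assms(2))
  moreover have "AE x in lborel. F x = norm (g x - h x)"
    using lim
  proof eventually_elim
    case (elim x)
    then have "(\<lambda>n. norm (s n x - h x)) \<longlonglongrightarrow> norm (g x - h x)"
      by (intro tendsto_intros)
    then show ?case unfolding F_def by (rule limI)
  qed
  ultimately show ?thesis using that by blast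
qed

lemma Lpb_norm_le_imp_unit_window_le:
  assumes "Lpb_norm_le p f \<delta>"
  shows "(\<integral>\<^sup>+ s\<in>{t..t+1}. ennreal (norm (f s) powr p) \<partial>lborel) \<le> ennreal (\<delta> powr p)"
  using assms unfolding Lpb_norm_le_def by (meson SUP_upper UNIV_I order_trans)

lemma Cb_infty_imp_continuous_bounded:
  assumes "Cb_infty h"
  shows "continuous_on UNIV h" "bounded (range h)"
proof -
  obtain D where "D 0 = h" "\<And>k t. (D k has_vector_derivative D (Suc k) t) (at t)"
    "\<And>k. bounded (range (D k))"
    using assms unfolding Cb_infty_def by blast
  then show "continuous_on UNIV h" "bounded (range h)"
    by (metis continuous_at_imp_continuous_on has_vector_derivative_continuous)+
qed

lemma Lpb_zero: "0 < p \<Longrightarrow> Lpb p (\<lambda>_::real. 0::'a::real_normed_vector)"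
  unfolding Lpb_def strongly_measurable_def
  by (auto intro!: exI[of _ "\<lambda>_ _. 0"])

definition uniformly_small_windows :: "real \<Rightarrow> (real \<Rightarrow> 'a::real_normed_vector) \<Rightarrow> bool" where
  "uniformly_small_windows p g \<longleftrightarrow> (\<forall>\<epsilon>>0. \<exists>\<tau>>0. \<forall>t.
     (\<integral>\<^sup>+ s\<in>{t..t+\<tau>}. ennreal (norm (g s) powr p) \<partial>lborel) \<le> ennreal \<epsilon>)"

lemma uniformly_small_windows_imp_weakly_normal:
  assumes "0 < p" "uniformly_small_windows p g"
  shows "weakly_normal p g"
  unfolding weakly_normal_def
proof (intro allI impI)
  fix \<epsilon> :: real
  assume "\<epsilon> > 0"
  then obtain \<tau> where "\<tau> > 0"
    "\<forall>t. (\<integral>\<^sup>+ s\<in>{t..t+\<tau>}. ennreal (norm (g s) powr p) \<partial>lborel) \<le> ennreal \<epsilon>"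
    using assms(2) unfolding uniformly_small_windows_def by blast
  then show "\<exists>\<tau>>0. \<exists>B g\<epsilon>. finite B \<and> Lpb p g\<epsilon> \<and> range g\<epsilon> \<subseteq> span B \<and>
      (\<forall>t. (\<integral>\<^sup>+ s\<in>{t..t+\<tau>}. ennreal (norm (g s - g\<epsilon> s) powr p) \<partial>lborel) \<le> ennreal \<epsilon>)"
    using Lpb_zero[OF assms(1)]
    by (intro exI[of _ \<tau>] conjI exI[of _ "{}"] exI[of _ "\<lambda>_. 0"]) auto
qed

lemma normal_imp_uniformly_small_windows:
  assumes "normal p g"
  shows "uniformly_small_windows p g"
  unfolding uniformly_small_windows_def
proof (intro allI impI)
  fix \<epsilon> :: real
  assume "\<epsilon> > 0"
  then have "\<forall>\<^sub>F \<tau> in at_right 0.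
      (SUP t. \<integral>\<^sup>+ s\<in>{t..t+\<tau>}. ennreal (norm (g s) powr p) \<partial>lborel) < ennreal \<epsilon>"
    using assms unfolding normal_def by (intro order_tendstoD(2)) auto
  then obtain b :: real where "b > 0" and small: "\<And>\<tau>. 0 < \<tau> \<Longrightarrow> \<tau> < b \<Longrightarrow>
      (SUP t. \<integral>\<^sup>+ s\<in>{t..t+\<tau>}. ennreal (norm (g s) powr p) \<partial>lborel) < ennreal \<epsilon>"
    by (auto simp: eventually_at_right_field)
  then obtain \<tau> :: real where "\<tau> > 0"
    "(SUP t. \<integral>\<^sup>+ s\<in>{t..t+\<tau>}. ennreal (norm (g s) powr p) \<partial>lborel) < ennreal \<epsilon>"
    using \<open>b > 0\<close> small[of "b / 2"] by (intro that[of "b / 2"]) auto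
  then show "\<exists>\<tau>>0. \<forall>t. (\<integral>\<^sup>+ s\<in>{t..t+\<tau>}. ennreal (norm (g s) powr p) \<partial>lborel) \<le> ennreal \<epsilon>"
    by (meson SUP_upper UNIV_I order.strict_implies_order order_trans)
qed

lemma window_integral_le_approx:
  fixes g h :: "real \<Rightarrow> 'a::real_normed_vector"
  assumes "strongly_measurable g" "continuous_on UNIV h" "\<And>x. norm (h x) \<le> M"
    and "0 < p" "0 \<le> \<tau>" "\<tau> \<le> 1"
  shows "(\<integral>\<^sup>+ s\<in>{t..t+\<tau>}. ennreal (norm (g s) powr p) \<partial>lborel)
    \<le> ennreal (2 powr p) * (\<integral>\<^sup>+ s\<in>{t..t+1}. ennreal (norm (g s - h s) powr p) \<partial>lborel)
      + ennreal (2 powr p * M powr p * \<tau>)"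
proof -
  obtain F where F: "F \<in> borel_measurable lborel" "AE x in lborel. F x = norm (g x - h x)"
    using strongly_measurable_norm_diff_AE_borel[OF assms(1,2)] .
  have M: "0 \<le> M" using assms(3) norm_ge_zero order_trans by blast
  let ?I = "indicator {t..t+\<tau>} :: real \<Rightarrow> ennreal"
  let ?K = "2 powr p :: real"
  have "(\<integral>\<^sup>+ s\<in>{t..t+\<tau>}. ennreal (norm (g s) powr p) \<partial>lborel)
      \<le> (\<integral>\<^sup>+ s. ennreal ?K * (ennreal (F s powr p) * ?I s) + ennreal (?K * M powr p) * ?I s \<partial>lborel)"
  proof (rule nn_integral_mono_AE)
    show "AE s in lborel. ennreal (norm (g s) powr p) * ?I s
        \<le> ennreal ?K * (ennreal (F s powr p) * ?I s) + ennreal (?K * M powr p) * ?I s"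
      using F(2)
    proof eventually_elim
      case (elim s)
      have "norm (g s) \<le> F s + M"
        using norm_triangle_ineq[of "g s - h s" "h s"] assms(3)[of s] elim by simp
      then have "norm (g s) powr p \<le> ?K * F s powr p + ?K * M powr p"
        using elim M assms(4) powr_le_of_le_add[of "norm (g s)" "F s" M p]
        by (simp add: distrib_left)
      then have "ennreal (norm (g s) powr p) \<le> ennreal ?K * ennreal (F s powr p) + ennreal (?K * M powr p)"
        by (simp add: ennreal_mult[symmetric] ennreal_plus[symmetric] del: ennreal_plus)
      then show ?case by (auto split: split_indicator)
    qed
  qed
  also have "\<dots> = ennreal ?K * (\<integral>\<^sup>+ s. ennreal (F s powr p) * ?I s \<partial>lborel)
      + ennreal (?K * M powr p * \<tau>)"
    using F(1) assms(5)
    by (subst nn_integral_add) (auto simp: nn_integral_cmult nn_integral_cmult_indicator ennreal_mult)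
  also have "(\<integral>\<^sup>+ s. ennreal (F s powr p) * ?I s \<partial>lborel)
      \<le> (\<integral>\<^sup>+ s\<in>{t..t+1}. ennreal (F s powr p) \<partial>lborel)"
    using assms(6) by (intro nn_integral_mono) (auto split: split_indicator)
  also have "\<dots> = (\<integral>\<^sup>+ s\<in>{t..t+1}. ennreal (norm (g s - h s) powr p) \<partial>lborel)"
    using F(2) by (intro nn_integral_cong_AE) auto
  finally show ?thesis by (simp add: mult_left_mono add_right_mono)
qed

lemma time_regular_imp_uniformly_small_windows:
  fixes g :: "real \<Rightarrow> 'a::real_normed_vector"
  assumes "0 < p" "Lpb p g" "time_regular p g"
  shows "uniformly_small_windows p g"
  unfolding uniformly_small_windows_def
proof (intro allI impI)
  fix \<epsilon> :: real
  assume "\<epsilon> > 0"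
  define K :: real where "K = 2 powr p"
  define \<delta> where "\<delta> = (\<epsilon> / (2 * K)) powr (1/p)"
  have K: "K > 0" by (simp add: K_def)
  have "\<delta> > 0" using \<open>\<epsilon> > 0\<close> K by (simp add: \<delta>_def)
  then obtain h where "Cb_infty h" and approx: "Lpb_norm_le p (\<lambda>t. g t - h t) \<delta>"
    using assms(3) unfolding time_regular_def by blast
  then have h: "continuous_on UNIV h" "bounded (range h)"
    using Cb_infty_imp_continuous_bounded by blast+
  then obtain M where M: "\<And>x. norm (h x) \<le> M"
    unfolding bounded_iff by auto
  define C where "C = K * M powr p + 1"
  define \<tau> where "\<tau> = min 1 (\<epsilon> / (2 * C))"
  have C: "C > 0" using K by (simp add: C_def add_nonneg_pos)
  have \<tau>: "\<tau> > 0" "\<tau> \<le> 1" "K * M powr p * \<tau> \<le> \<epsilon> / 2"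
    using \<open>\<epsilon> > 0\<close> C mult_right_mono[of "K * M powr p" C "\<epsilon> / (2 * C)"]
    by (auto simp: \<tau>_def C_def min_def field_simps)
  have "\<forall>t. (\<integral>\<^sup>+ s\<in>{t..t+\<tau>}. ennreal (norm (g s) powr p) \<partial>lborel) \<le> ennreal \<epsilon>"
  proof
    fix t
    have "(\<integral>\<^sup>+ s\<in>{t..t+\<tau>}. ennreal (norm (g s) powr p) \<partial>lborel)
        \<le> ennreal K * (\<integral>\<^sup>+ s\<in>{t..t+1}. ennreal (norm (g s - h s) powr p) \<partial>lborel)
          + ennreal (K * M powr p * \<tau>)"
      unfolding K_def using assms(1,2) h(1) M \<tau>
      by (intro window_integral_le_approx) (auto simp: Lpb_def)
    also have "\<dots> \<le> ennreal K * ennreal (\<epsilon> / (2 * K)) + ennreal (\<epsilon> / 2)"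
      using Lpb_norm_le_imp_unit_window_le[OF approx, of t] \<open>\<epsilon> > 0\<close> K assms(1) \<tau>(3)
      by (intro add_mono mult_left_mono ennreal_leI) (auto simp: \<delta>_def powr_powr)
    also have "\<dots> = ennreal \<epsilon>"
      using K \<open>\<epsilon> > 0\<close> by (simp add: ennreal_mult[symmetric] ennreal_plus[symmetric] del: ennreal_plus)
    finally show "(\<integral>\<^sup>+ s\<in>{t..t+\<tau>}. ennreal (norm (g s) powr p) \<partial>lborel) \<le> ennreal \<epsilon>" .
  qed
  then show "\<exists>\<tau>>0. \<forall>t. (\<integral>\<^sup>+ s\<in>{t..t+\<tau>}. ennreal (norm (g s) powr p) \<partial>lborel) \<le> ennreal \<epsilon>"
    using \<tau>(1) by blast
qed

lemma space_regular_imp_weakly_normal: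
  assumes "0 < p" "space_regular p g"
  shows "weakly_normal p g"
  unfolding weakly_normal_def
proof (intro allI impI)
  fix \<epsilon> :: real
  assume "\<epsilon> > 0"
  then have "\<epsilon> powr (1/p) > 0" by simp
  then obtain B g\<epsilon> where B: "finite B" "Lpb p g\<epsilon>" "range g\<epsilon> \<subseteq> span B"
    and approx: "Lpb_norm_le p (\<lambda>t. g t - g\<epsilon> t) (\<epsilon> powr (1/p))"
    using assms(2) unfolding space_regular_def by blast
  have "\<forall>t. (\<integral>\<^sup>+ s\<in>{t..t+1}. ennreal (norm (g s - g\<epsilon> s) powr p) \<partial>lborel) \<le> ennreal \<epsilon>"
    using Lpb_norm_le_imp_unit_window_le[OF approx] \<open>\<epsilon> > 0\<close> assms(1) by (simp add: powr_powr)
  then show "\<exists>\<tau>>0. \<exists>B g\<epsilon>. finite B \<and> Lpb p g\<epsilon> \<and> range g\<epsilon> \<subseteq> span B \<and>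
      (\<forall>t. (\<integral>\<^sup>+ s\<in>{t..t+\<tau>}. ennreal (norm (g s - g\<epsilon> s) powr p) \<partial>lborel) \<le> ennreal \<epsilon>)"
    using B by (intro exI[of _ 1] conjI exI[of _ B] exI[of _ g\<epsilon>]) auto
qed

theorem proposition2p14:
  fixes g :: "real \<Rightarrow> 'a::banach" and p :: real
  assumes "reflexive_space TYPE('a)"
    and "1 < p"
    and "Lpb p g"
    and "time_regular p g \<or> space_regular p g \<or> normal p g"
  shows "weakly_normal p g"
proof -
  have "0 < p" using assms(2) by simp
  then show ?thesis
    using assms(3,4) space_regular_imp_weakly_normal uniformly_small_windows_imp_weakly_normal
      time_regular_imp_uniformly_small_windows normal_imp_uniformly_small_windows
    by blast
qed

end
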